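(* Let $A,B,C$ be real random variables on a common probability space with finite second moments, $\mathrm{Var}(B)>0$, $\mathbb{E}[A]\neq0$, $\mathbb{E}[C]\neq 0$, and set $R=\mathbb{E}[A]/\mathbb{E}[C]$. Let $n\ge1$ and let $(A_i,B_i,C_i)_{i=1,\dots,n}$ be i.i.d. copies of $(A,B,C)$. For $\alpha\in\mathbb{R}$ put $N_\alpha=\overline{A_n}+\alpha(\mathbb{E}[B]-\overline{B_n})$. Then the function $\alpha\mapsto\Phi(N_\alpha,\overline{C_n})$ has a unique minimizer on $\mathbb{R}$, namely $$\alpha_o'=\frac{\mathrm{Cov}(A,B)-R\,\mathrm{Cov}(B,C)}{\mathrm{Var}(B)}.$$
   Context: For a random variable $X$, $\overline{X_n}=\frac1n\sum_{i=1}^n X_i$ denotes the sample mean of the i.i.d. copies $X_1,\dots,X_n$. For real random variables $X,Z$ with finite second moments and $\mathbb{E}[Z]\neq0$, define the first-order (delta-method) approximation of the variance of the ratio $X/Z$: $$\Phi(X,Z)=\frac{\mathrm{Var}(X)}{\mathbb{E}[Z]^2}+\frac{\mathbb{E}[X]^2}{\mathbb{E}[Z]^4}\mathrm{Var}(Z)-2\frac{\mathbb{E}[X]}{\mathbb{E}[Z]^3}\mathrm{Cov}(X,Z).$$ The paper uses $\Phi(N_\alpha,\overline{C_n})$ as the variance of the CV/MC ratio estimator $N_\alpha/\overline{C_n}$ of $R$; $\mathbb{E}[B]$ is treated as a known constant. *)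

theory Defs
  imports "HOL-Probability.Probability"
begin

definition covariance :: "'a measure \<Rightarrow> ('a \<Rightarrow> real) \<Rightarrow> ('a \<Rightarrow> real) \<Rightarrow> real" where
  "covariance M X Y = (\<integral>x. (X x - (\<integral>y. X y \<partial>M)) * (Y x - (\<integral>y. Y y \<partial>M)) \<partial>M)"

definition var :: "'a measure \<Rightarrow> ('a \<Rightarrow> real) \<Rightarrow> real" where
  "var M X = (\<integral>x. (X x - (\<integral>y. X y \<partial>M))\<^sup>2 \<partial>M)"

text \<open>First-order (delta-method) approximation of the variance of the ratio X/Z.\<close>
definition Phi :: "'a measure \<Rightarrow> ('a \<Rightarrow> real) \<Rightarrow> ('a \<Rightarrow> real) \<Rightarrow> real" where
  "Phi M X Z =
     var M X / (\<integral>x. Z x \<partial>M)^2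
   + (\<integral>x. X x \<partial>M)^2 / (\<integral>x. Z x \<partial>M)^4 * var M Z
   - 2 * (\<integral>x. X x \<partial>M) / (\<integral>x. Z x \<partial>M)^3 * covariance M X Z"

definition sample_mean :: "nat \<Rightarrow> (nat \<Rightarrow> 'a \<Rightarrow> real) \<Rightarrow> 'a \<Rightarrow> real" where
  "sample_mean n X = (\<lambda>x. (\<Sum>i\<in>{1..n}. X i x) / real n)"

end

theory Submission
  imports Defs
begin

text \<open>Averaging i.i.d. copies leaves expectations unchanged and divides all variances and
covariances by \<open>n\<close>, so \<open>\<Phi>(N\<^sub>\<alpha>, C\<^sub>n) = \<Phi>(A + \<alpha>(E[B] - B), C) / n\<close>.
Bilinearity of the covariance turns the right-hand side into
\<open>\<Phi>(A, C) / n + Var(B) / (n E[C]\<^sup>2) (\<alpha>\<^sup>2 - 2 \<alpha>\<^sub>o \<alpha>)\<close>, a quadratic in \<open>\<alpha>\<close> with positive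
leading coefficient whose vertex is \<open>\<alpha>\<^sub>o\<close>.\<close>

definition square_integrable :: "'a measure \<Rightarrow> ('a \<Rightarrow> real) \<Rightarrow> bool" where
  "square_integrable M X \<longleftrightarrow> X \<in> borel_measurable M \<and> integrable M (\<lambda>x. (X x)\<^sup>2)"

lemma square_integrableI [intro?]:
  "X \<in> borel_measurable M \<Longrightarrow> integrable M (\<lambda>x. (X x)\<^sup>2) \<Longrightarrow> square_integrable M X"
  by (simp add: square_integrable_def)

lemma square_integrable_measurable [measurable_dest]:
  "square_integrable M X \<Longrightarrow> X \<in> borel_measurable M"
  by (simp add: square_integrable_def)

lemma integrable_mult_square_integrable:
  assumes "square_integrable M X" "square_integrable M Y"
  shows "integrable M (\<lambda>x. X x * Y x)"
proof (rule Bochner_Integration.integrable_bound)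
  show "integrable M (\<lambda>x. (X x)\<^sup>2 + (Y x)\<^sup>2)"
    using assms by (simp add: square_integrable_def)
  show "(\<lambda>x. X x * Y x) \<in> borel_measurable M"
    using assms by measurable
  have "\<bar>X x * Y x\<bar> \<le> (X x)\<^sup>2 + (Y x)\<^sup>2" for x
  proof -
    have "2 * (\<bar>X x\<bar> * \<bar>Y x\<bar>) \<le> (X x)\<^sup>2 + (Y x)\<^sup>2"
      using sum_squares_bound[of "\<bar>X x\<bar>" "\<bar>Y x\<bar>"] by simp
    moreover have "0 \<le> \<bar>X x\<bar> * \<bar>Y x\<bar>"
      by simp
    ultimately show ?thesis
      unfolding abs_mult by linarith
  qed
  then show "AE x in M. norm (X x * Y x) \<le> norm ((X x)\<^sup>2 + (Y x)\<^sup>2)"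
    by simp
qed

lemma square_integrable_add:
  assumes "square_integrable M X" "square_integrable M Y"
  shows "square_integrable M (\<lambda>x. X x + Y x)"
proof
  show "(\<lambda>x. X x + Y x) \<in> borel_measurable M"
    using assms by measurable
  have "(\<lambda>x. (X x + Y x)\<^sup>2) = (\<lambda>x. (X x)\<^sup>2 + 2 * (X x * Y x) + (Y x)\<^sup>2)"
    by (simp add: fun_eq_iff power2_sum)
  then show "integrable M (\<lambda>x. (X x + Y x)\<^sup>2)"
    using assms integrable_mult_square_integrable[OF assms] by (simp add: square_integrable_def)
qed

lemma square_integrable_cmult:
  assumes "square_integrable M X"
  shows "square_integrable M (\<lambda>x. c * X x)"
proof
  show "(\<lambda>x. c * X x) \<in> borel_measurable M"
    using assms by measurable
  show "integrable M (\<lambda>x. (c * X x)\<^sup>2)"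
    using assms by (simp add: square_integrable_def power_mult_distrib)
qed

lemma square_integrable_diff:
  assumes "square_integrable M X" "square_integrable M Y"
  shows "square_integrable M (\<lambda>x. X x - Y x)"
  using square_integrable_add[OF assms(1) square_integrable_cmult[OF assms(2), of "- 1"]] by simp

lemma square_integrable_divide:
  "square_integrable M X \<Longrightarrow> square_integrable M (\<lambda>x. X x / c)"
  using square_integrable_cmult[of M X "inverse c"] by (simp add: field_simps)

lemma square_integrable_sum:
  "finite I \<Longrightarrow> (\<And>i. i \<in> I \<Longrightarrow> square_integrable M (X i))
    \<Longrightarrow> square_integrable M (\<lambda>x. \<Sum>i\<in>I. X i x)"
proof (induction I rule: finite_induct)
  case empty
  then show ?case
    by (simp add: square_integrable_def)
next
  case (insert i I)
  then show ?case
    by (simp add: square_integrable_add)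
qed

lemma (in finite_measure) square_integrable_const: "square_integrable M (\<lambda>_. c)"
  by (simp add: square_integrable_def)

lemma (in finite_measure) integrable_square_integrable:
  "square_integrable M X \<Longrightarrow> integrable M X"
  by (simp add: square_integrable_def square_integrable_imp_integrable)

lemma covariance_commute: "covariance M X Y = covariance M Y X"
  unfolding covariance_def by (simp add: mult.commute)

lemma var_eq_covariance: "var M X = covariance M X X"
  unfolding covariance_def var_def by (simp add: power2_eq_square)

lemma covariance_cmult_left: "covariance M (\<lambda>x. c * X x) Z = c * covariance M X Z"
proof -
  have "(c * X x - c * integral\<^sup>L M X) * (Z x - integral\<^sup>L M Z)
      = c * ((X x - integral\<^sup>L M X) * (Z x - integral\<^sup>L M Z))" for x
    by (simp add: algebra_simps)
  then show ?thesis
    unfolding covariance_def by (simp only: integral_mult_right_zero)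
qed

lemma covariance_divide_left: "covariance M (\<lambda>x. X x / c) Z = covariance M X Z / c"
  using covariance_cmult_left[of M "inverse c" X Z] by (simp add: field_simps)

lemma (in prob_space) covariance_add_const_left:
  "integrable M X \<Longrightarrow> covariance M (\<lambda>x. X x + c) Z = covariance M X Z"
  unfolding covariance_def by (simp add: prob_space)

lemma (in prob_space) covariance_add_left:
  assumes X: "square_integrable M X" and Y: "square_integrable M Y" and Z: "square_integrable M Z"
  shows "covariance M (\<lambda>x. X x + Y x) Z = covariance M X Z + covariance M Y Z"
proof -
  have "expectation (\<lambda>x. X x + Y x) = expectation X + expectation Y"
    using X Y by (simp add: integrable_square_integrable)
  moreover have "(\<lambda>x. (X x + Y x - (expectation X + expectation Y)) * (Z x - expectation Z))
    = (\<lambda>x. (X x - expectation X) * (Z x - expectation Z) + (Y x - expectation Y) * (Z x - expectation Z))"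
    by (simp add: fun_eq_iff algebra_simps)
  moreover have "integrable M (\<lambda>x. (X x - expectation X) * (Z x - expectation Z))"
    "integrable M (\<lambda>x. (Y x - expectation Y) * (Z x - expectation Z))"
    using X Y Z square_integrable_diff[OF _ square_integrable_const]
    by (auto intro: integrable_mult_square_integrable)
  ultimately show ?thesis
    unfolding covariance_def by simp
qed

lemma (in prob_space) covariance_sum_left:
  assumes "finite I" "\<And>i. i \<in> I \<Longrightarrow> square_integrable M (X i)" "square_integrable M Z"
  shows "covariance M (\<lambda>x. \<Sum>i\<in>I. X i x) Z = (\<Sum>i\<in>I. covariance M (X i) Z)"
  using assms
proof (induction I rule: finite_induct)
  case empty
  then show ?case
    by (simp add: covariance_def)
next
  case (insert i I)
  then show ?case
    by (simp add: covariance_add_left square_integrable_sum)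
qed

lemma (in prob_space) covariance_sample_mean_left:
  assumes "\<And>i. i \<in> {1..n} \<Longrightarrow> square_integrable M (X i)" "square_integrable M Z"
  shows "covariance M (sample_mean n X) Z = (\<Sum>i\<in>{1..n}. covariance M (X i) Z) / real n"
proof -
  have "covariance M (\<lambda>x. \<Sum>i\<in>{1..n}. X i x) Z = (\<Sum>i\<in>{1..n}. covariance M (X i) Z)"
    by (rule covariance_sum_left) (use assms in auto)
  then show ?thesis
    by (simp only: sample_mean_def covariance_divide_left)
qed

lemma square_integrable_sample_mean:
  "(\<And>i. i \<in> {1..n} \<Longrightarrow> square_integrable M (X i)) \<Longrightarrow> square_integrable M (sample_mean n X)"
  unfolding sample_mean_def by (intro square_integrable_divide square_integrable_sum) auto

lemma (in prob_space) covariance_sample_mean: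
  assumes X: "\<And>i. i \<in> {1..n} \<Longrightarrow> square_integrable M (X i)"
    and Y: "\<And>i. i \<in> {1..n} \<Longrightarrow> square_integrable M (Y i)"
  shows "covariance M (sample_mean n X) (sample_mean n Y)
    = (\<Sum>i\<in>{1..n}. \<Sum>j\<in>{1..n}. covariance M (X i) (Y j)) / (real n)\<^sup>2"
proof -
  have inner: "covariance M (X i) (sample_mean n Y) = (\<Sum>j\<in>{1..n}. covariance M (X i) (Y j)) / real n"
    if "i \<in> {1..n}" for i
  proof -
    have "covariance M (X i) (sample_mean n Y) = covariance M (sample_mean n Y) (X i)"
      by (rule covariance_commute)
    also have "\<dots> = (\<Sum>j\<in>{1..n}. covariance M (Y j) (X i)) / real n"
      by (rule covariance_sample_mean_left[OF Y X[OF that]])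
    finally show ?thesis
      by (simp add: covariance_commute)
  qed
  have "covariance M (sample_mean n X) (sample_mean n Y)
      = (\<Sum>i\<in>{1..n}. covariance M (X i) (sample_mean n Y)) / real n"
    by (rule covariance_sample_mean_left[OF X square_integrable_sample_mean[OF Y]])
  also have "\<dots> = (\<Sum>i\<in>{1..n}. (\<Sum>j\<in>{1..n}. covariance M (X i) (Y j)) / real n) / real n"
    using inner by simp
  finally show ?thesis
    by (simp add: sum_divide_distrib[symmetric] power2_eq_square)
qed

lemma (in prob_space) expectation_sample_mean:
  assumes "n \<ge> 1" "\<And>i. i \<in> {1..n} \<Longrightarrow> integrable M (X i)"
    and "\<And>i. i \<in> {1..n} \<Longrightarrow> expectation (X i) = \<mu>"
  shows "expectation (sample_mean n X) = \<mu>"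
  using assms by (simp add: sample_mean_def)

lemma (in prob_space) indep_vars_covariance_eq_0:
  assumes indep: "indep_vars (\<lambda>_. N) X I" and "i \<in> I" "j \<in> I" "i \<noteq> j"
    and "g \<in> borel_measurable N" "h \<in> borel_measurable N"
    and "integrable M (\<lambda>x. g (X i x))" "integrable M (\<lambda>x. h (X j x))"
  shows "covariance M (\<lambda>x. g (X i x)) (\<lambda>x. h (X j x)) = 0"
proof -
  define Y where "Y k = (if k = i then (\<lambda>v. g v - expectation (\<lambda>x. g (X i x)))
    else (\<lambda>v. h v - expectation (\<lambda>x. h (X j x))))" for k
  have "indep_vars (\<lambda>_. N) X {i, j}"
    using indep_vars_subset[OF indep] assms(2,3) by simp
  then have "indep_vars (\<lambda>_. borel) (\<lambda>k. Y k \<circ> X k) {i, j}"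
    by (rule indep_vars_compose) (use assms(5,6) in \<open>auto simp: Y_def\<close>)
  then have "expectation (\<lambda>x. \<Prod>k\<in>{i, j}. (Y k \<circ> X k) x) = (\<Prod>k\<in>{i, j}. expectation (Y k \<circ> X k))"
    by (intro indep_vars_lebesgue_integral) (use assms(7,8) in \<open>auto simp: Y_def comp_def\<close>)
  moreover have "expectation (Y i \<circ> X i) = 0"
    using assms(7) by (simp add: Y_def comp_def prob_space)
  ultimately show ?thesis
    using assms(4) by (simp add: covariance_def Y_def comp_def)
qed

locale iid_copies = prob_space M for M :: "'a measure" +
  fixes N :: "'b measure" and X :: "'a \<Rightarrow> 'b" and Xs :: "nat \<Rightarrow> 'a \<Rightarrow> 'b" and n :: nat
  assumes measurable_model: "X \<in> measurable M N"
    and measurable_copy: "i \<in> {1..n} \<Longrightarrow> Xs i \<in> measurable M N"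
    and indep_copies: "indep_vars (\<lambda>_. N) Xs {1..n}"
    and distr_copy: "i \<in> {1..n} \<Longrightarrow> distr M N (Xs i) = distr M N X"
begin

lemma
  fixes f :: "'b \<Rightarrow> real"
  assumes "i \<in> {1..n}" "f \<in> borel_measurable N"
  shows expectation_copy: "expectation (\<lambda>x. f (Xs i x)) = expectation (\<lambda>x. f (X x))"
    and integrable_copy_iff: "integrable M (\<lambda>x. f (Xs i x)) \<longleftrightarrow> integrable M (\<lambda>x. f (X x))"
  using integral_distr[of "Xs i" M N f] integral_distr[of X M N f]
    integrable_distr_eq[of "Xs i" M N f] integrable_distr_eq[of X M N f]
    measurable_model measurable_copy distr_copy assms
  by simp_all

lemma square_integrable_copy:
  assumes "i \<in> {1..n}" "g \<in> borel_measurable N" "square_integrable M (\<lambda>x. g (X x))"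
  shows "square_integrable M (\<lambda>x. g (Xs i x))"
proof
  show "(\<lambda>x. g (Xs i x)) \<in> borel_measurable M"
    using measurable_copy[OF assms(1)] assms(2) by measurable
  show "integrable M (\<lambda>x. (g (Xs i x))\<^sup>2)"
    using integrable_copy_iff[OF assms(1), of "\<lambda>v. (g v)\<^sup>2"] assms(2,3)
    by (simp add: square_integrable_def)
qed

lemma covariance_copies:
  assumes "i \<in> {1..n}" "j \<in> {1..n}" "g \<in> borel_measurable N" "h \<in> borel_measurable N"
    and "square_integrable M (\<lambda>x. g (X x))" "square_integrable M (\<lambda>x. h (X x))"
  shows "covariance M (\<lambda>x. g (Xs i x)) (\<lambda>x. h (Xs j x))
    = (if i = j then covariance M (\<lambda>x. g (X x)) (\<lambda>x. h (X x)) else 0)"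
proof (cases "i = j")
  case True
  have "(\<lambda>v. (g v - expectation (\<lambda>x. g (X x))) * (h v - expectation (\<lambda>x. h (X x))))
    \<in> borel_measurable N"
    using assms(3,4) by measurable
  from expectation_copy[OF assms(1) this] show ?thesis
    using True expectation_copy[OF assms(1) assms(3)] expectation_copy[OF assms(1) assms(4)]
    by (simp add: covariance_def)
next
  case False
  then show ?thesis
    using assms indep_vars_covariance_eq_0[OF indep_copies]
      integrable_square_integrable square_integrable_copy by simp
qed

lemma expectation_sample_mean_copies:
  assumes "n \<ge> 1" "g \<in> borel_measurable N" "square_integrable M (\<lambda>x. g (X x))"
  shows "expectation (sample_mean n (\<lambda>i x. g (Xs i x))) = expectation (\<lambda>x. g (X x))"
  using assms by (intro expectation_sample_mean)
    (simp_all add: expectation_copy integrable_square_integrable square_integrable_copy)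

lemma covariance_sample_mean_copies:
  assumes "g \<in> borel_measurable N" "h \<in> borel_measurable N"
    and "square_integrable M (\<lambda>x. g (X x))" "square_integrable M (\<lambda>x. h (X x))"
  shows "covariance M (sample_mean n (\<lambda>i x. g (Xs i x))) (sample_mean n (\<lambda>i x. h (Xs i x)))
    = covariance M (\<lambda>x. g (X x)) (\<lambda>x. h (X x)) / real n"
proof -
  let ?c = "covariance M (\<lambda>x. g (X x)) (\<lambda>x. h (X x))"
  have "covariance M (sample_mean n (\<lambda>i x. g (Xs i x))) (sample_mean n (\<lambda>i x. h (Xs i x)))
      = (\<Sum>i\<in>{1..n}. \<Sum>j\<in>{1..n}. covariance M (\<lambda>x. g (Xs i x)) (\<lambda>x. h (Xs j x))) / (real n)\<^sup>2"
    by (rule covariance_sample_mean) (use assms square_integrable_copy in auto)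
  also have "\<dots> = (\<Sum>i\<in>{1..n}. \<Sum>j\<in>{1..n}. if i = j then ?c else 0) / (real n)\<^sup>2"
    by (intro arg_cong2[where f = "(/)"] sum.cong refl covariance_copies assms)
  also have "\<dots> = ?c / real n"
    by (simp add: power2_eq_square)
  finally show ?thesis .
qed

lemma Phi_sample_mean_copies:
  assumes "n \<ge> 1" "g \<in> borel_measurable N" "h \<in> borel_measurable N"
    and "square_integrable M (\<lambda>x. g (X x))" "square_integrable M (\<lambda>x. h (X x))"
  shows "Phi M (sample_mean n (\<lambda>i x. g (Xs i x))) (sample_mean n (\<lambda>i x. h (Xs i x)))
    = Phi M (\<lambda>x. g (X x)) (\<lambda>x. h (X x)) / real n"
  using assms
  by (simp add: Phi_def var_eq_covariance expectation_sample_mean_copies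
      covariance_sample_mean_copies diff_divide_distrib add_divide_distrib)

end

lemma (in prob_space) covariance_control_variate_left:
  assumes A: "square_integrable M A" and B: "square_integrable M B" and Z: "square_integrable M Z"
  shows "covariance M (\<lambda>x. A x + \<alpha> * (k - B x)) Z = covariance M A Z - \<alpha> * covariance M B Z"
proof -
  have B': "square_integrable M (\<lambda>x. - \<alpha> * B x)"
    using B by (rule square_integrable_cmult)
  have "(\<lambda>x. A x + \<alpha> * (k - B x)) = (\<lambda>x. (A x + - \<alpha> * B x) + \<alpha> * k)"
    by (simp add: fun_eq_iff algebra_simps)
  then have "covariance M (\<lambda>x. A x + \<alpha> * (k - B x)) Z = covariance M (\<lambda>x. A x + - \<alpha> * B x) Z"
    using integrable_square_integrable[OF square_integrable_add[OF A B']]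
    by (simp only: covariance_add_const_left)
  also have "\<dots> = covariance M A Z + covariance M (\<lambda>x. - \<alpha> * B x) Z"
    by (rule covariance_add_left[OF A B' Z])
  finally show ?thesis
    unfolding covariance_cmult_left by simp
qed

lemma (in prob_space) covariance_control_variate_right:
  assumes "square_integrable M A" "square_integrable M B" "square_integrable M Z"
  shows "covariance M Z (\<lambda>x. A x + \<alpha> * (k - B x)) = covariance M Z A - \<alpha> * covariance M Z B"
  using covariance_control_variate_left[OF assms] by (simp only: covariance_commute[of M Z])

lemma (in prob_space) Phi_control_variate:
  assumes A: "square_integrable M A" and B: "square_integrable M B" and C: "square_integrable M C"
  shows "Phi M (\<lambda>x. A x + \<alpha> * (expectation B - B x)) C = Phi M A C
    + (\<alpha>\<^sup>2 * var M B - 2 * \<alpha> * (covariance M A B - expectation A / expectation C * covariance M B C))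
      / (expectation C)\<^sup>2"
proof -
  let ?N = "\<lambda>x. A x + \<alpha> * (expectation B - B x)"
  have N: "square_integrable M ?N"
    using A B by (intro square_integrable_add square_integrable_cmult square_integrable_diff
      square_integrable_const)
  have mean: "expectation ?N = expectation A"
    using A B by (simp add: integrable_square_integrable prob_space)
  have cov_A: "covariance M A ?N = var M A - \<alpha> * covariance M A B"
    unfolding var_eq_covariance by (rule covariance_control_variate_right[OF A B A])
  have cov_B: "covariance M B ?N = covariance M A B - \<alpha> * var M B"
    unfolding var_eq_covariance covariance_commute[of M A B]
    by (rule covariance_control_variate_right[OF A B B])
  have "var M ?N = covariance M A ?N - \<alpha> * covariance M B ?N"
    unfolding var_eq_covariance by (rule covariance_control_variate_left[OF A B N])
  also have "\<dots> = var M A - 2 * \<alpha> * covariance M A B + \<alpha>\<^sup>2 * var M B"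
    unfolding cov_A cov_B by (simp add: power2_eq_square algebra_simps)
  finally have var: "var M ?N = var M A - 2 * \<alpha> * covariance M A B + \<alpha>\<^sup>2 * var M B" .
  have cov_C: "covariance M ?N C = covariance M A C - \<alpha> * covariance M B C"
    by (rule covariance_control_variate_left[OF A B C])
  show ?thesis
    unfolding Phi_def mean var cov_C
    by (simp add: diff_divide_distrib add_divide_distrib right_diff_distrib power3_eq_cube
        power2_eq_square mult_ac)
qed

lemma quadratic_unique_minimizer:
  fixes f :: "real \<Rightarrow> real"
  assumes "k > 0" and f: "\<And>x. f x = r + k * (x\<^sup>2 - 2 * m * x)"
  shows "(\<forall>y. f m \<le> f y) \<and> (\<forall>x. (\<forall>y. f x \<le> f y) \<longrightarrow> x = m)"
proof -
  have square: "f x = f m + k * (x - m)\<^sup>2" for x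
    unfolding f by (simp add: power2_eq_square algebra_simps)
  have "f m \<le> f y" for y
    using square[of y] \<open>k > 0\<close> by (simp add: mult_nonneg_nonneg)
  moreover have "x = m" if "f x \<le> f m" for x
    using square[of x] that \<open>k > 0\<close> by (simp add: mult_le_0_iff)
  ultimately show ?thesis
    by blast
qed

lemma (in prob_space) Phi_control_variate_sample_mean:
  assumes A: "square_integrable M A" and B: "square_integrable M B" and C: "square_integrable M C"
    and "n \<ge> 1"
    and "\<And>i. i \<in> {1..n} \<Longrightarrow> As i \<in> borel_measurable M"
    and "\<And>i. i \<in> {1..n} \<Longrightarrow> Bs i \<in> borel_measurable M"
    and "\<And>i. i \<in> {1..n} \<Longrightarrow> Cs i \<in> borel_measurable M"
    and "indep_vars (\<lambda>_. borel) (\<lambda>i x. (As i x, Bs i x, Cs i x)) {1..n}"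
    and "\<And>i. i \<in> {1..n} \<Longrightarrow>
           distr M borel (\<lambda>x. (As i x, Bs i x, Cs i x)) = distr M borel (\<lambda>x. (A x, B x, C x))"
  shows "Phi M (\<lambda>x. sample_mean n As x + \<alpha> * (expectation B - sample_mean n Bs x)) (sample_mean n Cs)
    = Phi M (\<lambda>x. A x + \<alpha> * (expectation B - B x)) C / real n"
proof -
  define X where "X x = (A x, B x, C x)" for x
  define Xs where "Xs i x = (As i x, Bs i x, Cs i x)" for i x
  define g where "g v = fst v + \<alpha> * (expectation B - fst (snd v))" for v :: "real \<times> real \<times> real"
  interpret iid_copies M borel X Xs n
    using A B C assms(5-9) unfolding X_def Xs_def by unfold_locales (auto simp: comp_def)
  have g_measurable: "g \<in> borel_measurable borel"
    unfolding g_def by (intro borel_measurable_continuous_onI continuous_intros)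
  have snd_snd_measurable: "(\<lambda>v :: real \<times> real \<times> real. snd (snd v)) \<in> borel_measurable borel"
    by (intro borel_measurable_continuous_onI continuous_intros)
  have g_model: "g (X x) = A x + \<alpha> * (expectation B - B x)" for x
    by (simp add: g_def X_def)
  have control_variate: "(\<lambda>x. sample_mean n As x + \<alpha> * (expectation B - sample_mean n Bs x))
      = sample_mean n (\<lambda>i x. g (Xs i x))"
    using \<open>n \<ge> 1\<close> by (auto simp: fun_eq_iff sample_mean_def g_def Xs_def sum.distrib sum_subtractf
        sum_distrib_left field_simps)
  have "square_integrable M (\<lambda>x. g (X x))"
    unfolding g_model using A B
    by (intro square_integrable_add square_integrable_cmult square_integrable_diff square_integrable_const)
  moreover have "square_integrable M (\<lambda>x. snd (snd (X x)))"
    using C by (simp add: X_def)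
  ultimately have "Phi M (sample_mean n (\<lambda>i x. g (Xs i x))) (sample_mean n (\<lambda>i x. snd (snd (Xs i x))))
      = Phi M (\<lambda>x. g (X x)) (\<lambda>x. snd (snd (X x))) / real n"
    by (rule Phi_sample_mean_copies[OF \<open>n \<ge> 1\<close> g_measurable snd_snd_measurable])
  then show ?thesis
    unfolding control_variate g_model by (simp add: Xs_def X_def)
qed

theorem mainTheorem3:
  fixes M :: "'a measure"
    and A B C :: "'a \<Rightarrow> real"
    and As Bs Cs :: "nat \<Rightarrow> 'a \<Rightarrow> real"
    and n :: nat
  assumes "prob_space M"
    and "A \<in> borel_measurable M" and "B \<in> borel_measurable M" and "C \<in> borel_measurable M"
    and "integrable M (\<lambda>x. (A x)\<^sup>2)" and "integrable M (\<lambda>x. (B x)\<^sup>2)"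
    and "integrable M (\<lambda>x. (C x)\<^sup>2)"
    and "var M B > 0"
    and "(\<integral>x. A x \<partial>M) \<noteq> 0" and "(\<integral>x. C x \<partial>M) \<noteq> 0"
    and "n \<ge> 1"
    and "\<And>i. i \<in> {1..n} \<Longrightarrow> As i \<in> borel_measurable M"
    and "\<And>i. i \<in> {1..n} \<Longrightarrow> Bs i \<in> borel_measurable M"
    and "\<And>i. i \<in> {1..n} \<Longrightarrow> Cs i \<in> borel_measurable M"
    and "prob_space.indep_vars M (\<lambda>_. borel) (\<lambda>i x. (As i x, Bs i x, Cs i x)) {1..n}"
    and "\<And>i. i \<in> {1..n} \<Longrightarrow>
           distr M borel (\<lambda>x. (As i x, Bs i x, Cs i x)) = distr M borel (\<lambda>x. (A x, B x, C x))"
  shows "let R = (\<integral>x. A x \<partial>M) / (\<integral>x. C x \<partial>M);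
             N = (\<lambda>\<alpha> x. sample_mean n As x + \<alpha> * ((\<integral>y. B y \<partial>M) - sample_mean n Bs x));
             f = (\<lambda>\<alpha>. Phi M (N \<alpha>) (sample_mean n Cs));
             \<alpha>o = (covariance M A B - R * covariance M B C) / var M B
         in (\<forall>\<beta>. f \<alpha>o \<le> f \<beta>) \<and> (\<forall>\<alpha>. (\<forall>\<beta>. f \<alpha> \<le> f \<beta>) \<longrightarrow> \<alpha> = \<alpha>o)"
proof -
  interpret prob_space M by fact
  have A: "square_integrable M A" and B: "square_integrable M B" and C: "square_integrable M C"
    using assms(2-7) by (auto intro: square_integrableI)
  define f where "f \<alpha> = Phi M (\<lambda>x. sample_mean n As x + \<alpha> * (expectation B - sample_mean n Bs x))
    (sample_mean n Cs)" for \<alpha>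
  define \<alpha>o where "\<alpha>o = (covariance M A B - expectation A / expectation C * covariance M B C) / var M B"
  have f_population: "f \<alpha> = Phi M (\<lambda>x. A x + \<alpha> * (expectation B - B x)) C / real n" for \<alpha>
    unfolding f_def by (rule Phi_control_variate_sample_mean[OF A B C assms(11-16)])
  have "f \<alpha> = Phi M A C / real n + var M B / ((expectation C)\<^sup>2 * real n) * (\<alpha>\<^sup>2 - 2 * \<alpha>o * \<alpha>)"
    for \<alpha>
    unfolding f_population Phi_control_variate[OF A B C] \<alpha>o_def
    using assms(8,10,11) by (simp add: field_simps)
  then have "(\<forall>\<beta>. f \<alpha>o \<le> f \<beta>) \<and> (\<forall>\<alpha>. (\<forall>\<beta>. f \<alpha> \<le> f \<beta>) \<longrightarrow> \<alpha> = \<alpha>o)"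
    by (rule quadratic_unique_minimizer[rotated]) (use assms(8,10,11) in simp)
  then show ?thesis
    unfolding Let_def f_def \<alpha>o_def .
qed

end
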